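(* Let $1\le k<n$, let $\kappa_1,\dots,\kappa_n\in\mathbb C$ be pairwise distinct and $\beta_1,\dots,\beta_{n-1}\in\mathbb C^*$, with $\beta_0:=1$, and $I_k=\{1,\dots,k\}$. Let $A$ be the $k\times n$ matrix with $A_{ij}=\delta_{ij}$ for $j\le k$ and $$A_{ij}=\frac{\beta_{i-1}}{\beta_{j-1}(\kappa_j-\kappa_i)^2}\prod_{l\in I_k,\,l\ne i}\frac{\kappa_i-\kappa_l}{\kappa_j-\kappa_l}\qquad (i\le k<j\le n).$$ For every $k$-subset $J\subset[n]$, write $J=(I_k\setminus\{i_1,\dots,i_s\})\cup\{j_1,\dots,j_s\}$ with $i_1<\dots<i_s$ in $I_k$, $j_1<\dots<j_s$ in $[n]\setminus I_k$, $0\le s\le\min\{k,n-k\}$, and set $$\alpha_J=\frac{\prod_{1\le l<m\le s}(\kappa_{i_m}-\kappa_{i_l})^2(\kappa_{j_m}-\kappa_{j_l})^2}{\prod_{1\le l,m\le s}(\kappa_{j_m}-\kappa_{i_l})^2}\prod_{l=1}^s\frac{\beta_{i_l-1}}{\beta_{j_l-1}}$$ (empty products equal $1$). Then the maximal minor of $A$ on columns $J$ satisfies $A_J=\alpha_J\,K_{I_k}/K_J$, where $K_J=\prod_{i<j,\ i,j\in J}(\kappa_j-\kappa_i)$.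
   Context: Here $n=g+1$ for the genus-$g$ banana graph; $\alpha_J$ are the coefficients $\exp[\tfrac12\mathbf c_J^TR\mathbf c_J]\exp[\mathbf c_J^T\mathbf D]$ of the degenerate theta function at the Delaunay vertex $\mathbf c_J$, with $\mathbf D=(\log\beta_1,\dots,\log\beta_g)$, written explicitly. *)

theory Defs
  imports Complex_Main "Jordan_Normal_Form.Determinant"
begin

text \<open>Indices are 1-based as in the paper: kappa 1 .. kappa n, beta 1 .. beta (n-1);
  beta_0 := 1 is built in via bet.\<close>

definition bet :: "(nat \<Rightarrow> complex) \<Rightarrow> nat \<Rightarrow> complex" where
  "bet beta i = (if i = 0 then 1 else beta i)"

definition Aent :: "nat \<Rightarrow> (nat \<Rightarrow> complex) \<Rightarrow> (nat \<Rightarrow> complex) \<Rightarrow> nat \<Rightarrow> nat \<Rightarrow> complex" where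
  "Aent k kappa beta i j =
     (if j \<le> k then (if i = j then 1 else 0)
      else bet beta (i - 1) / (bet beta (j - 1) * (kappa j - kappa i)^2) *
           (\<Prod>l\<in>{1..k} - {i}. (kappa i - kappa l) / (kappa j - kappa l)))"

definition Amat :: "nat \<Rightarrow> nat \<Rightarrow> (nat \<Rightarrow> complex) \<Rightarrow> (nat \<Rightarrow> complex) \<Rightarrow> complex mat" where
  "Amat k n kappa beta = mat k n (\<lambda>(r, c). Aent k kappa beta (r + 1) (c + 1))"

definition minorA :: "nat \<Rightarrow> nat \<Rightarrow> (nat \<Rightarrow> complex) \<Rightarrow> (nat \<Rightarrow> complex) \<Rightarrow> nat set \<Rightarrow> complex" where
  "minorA k n kappa beta J =
     (let cs = sorted_list_of_set J
      in det (mat k k (\<lambda>(r, c). Amat k n kappa beta $$ (r, cs ! c - 1))))"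

definition KJ :: "(nat \<Rightarrow> complex) \<Rightarrow> nat set \<Rightarrow> complex" where
  "KJ kappa J = (\<Prod>p\<in>{(i, j). i \<in> J \<and> j \<in> J \<and> i < j}. kappa (snd p) - kappa (fst p))"

definition alphaJ :: "nat \<Rightarrow> (nat \<Rightarrow> complex) \<Rightarrow> (nat \<Rightarrow> complex) \<Rightarrow> nat set \<Rightarrow> complex" where
  "alphaJ k kappa beta J =
     (let is = sorted_list_of_set ({1..k} - J);
          js = sorted_list_of_set (J - {1..k});
          s = length js
      in (\<Prod>p\<in>{(l, m). l < m \<and> m < s}.
             (kappa (is ! snd p) - kappa (is ! fst p))^2 * (kappa (js ! snd p) - kappa (js ! fst p))^2)
         / (\<Prod>p\<in>{..<s} \<times> {..<s}. (kappa (js ! snd p) - kappa (is ! fst p))^2)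
         * (\<Prod>l<s. bet beta (is ! l - 1) / bet beta (js ! l - 1)))"

end

theory Submission
  imports Defs
begin

(* Write I = {1..k} and s c = bet beta (c - 1) * prod_{l in I - {c}} (kappa c - kappa l)^2.
   Then A_ic = s i / s c * L_i (kappa c), where L_i is the Lagrange basis polynomial of the nodes
   kappa 1, ..., kappa k. So the minor on J is prod_I s / prod_J s times det (L_i (kappa c)), and
   the latter determinant is K_J / K_I: multiplying the coefficient matrix of the L_i with a
   Vandermonde matrix evaluates the L_i, and at the nodes themselves this gives the identity.
   Writing I and J as disjoint unions U + S and U + T with U = I /\ J, both prod_S s / prod_T s
   and alpha_J * (K_I / K_J)^2 reduce to the same squared products of differences. *)

section \<open>Vandermonde determinant\<close>

definition vandermonde :: "'a::comm_ring_1 list \<Rightarrow> 'a mat" where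
  "vandermonde xs = mat (length xs) (length xs) (\<lambda>(i, j). (xs ! j) ^ i)"

lemma vandermonde_carrier [simp]: "vandermonde xs \<in> carrier_mat (length xs) (length xs)"
  by (simp add: vandermonde_def)

lemma prod_index_pairs_Suc:
  "(\<Prod>(i, j)\<in>{(i, j). i < j \<and> j < Suc m}. f i j) =
   (\<Prod>j<m. f 0 (Suc j)) * (\<Prod>(i, j)\<in>{(i, j). i < j \<and> j < m}. f (Suc i) (Suc j))"
proof -
  let ?P = "\<lambda>m. {(i, j). i < j \<and> j < (m::nat)}"
  have fin: "finite (?P m)"
    by (rule finite_subset[of _ "{..<m} \<times> {..<m}"]) auto
  have split: "?P (Suc m) = (\<lambda>j. (0, Suc j)) ` {..<m} \<union> (\<lambda>(i, j). (Suc i, Suc j)) ` ?P m"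
    by (auto simp: image_iff gr0_conv_Suc less_Suc_eq_0_disj)
  have "(\<Prod>(i, j)\<in>?P (Suc m). f i j) =
        (\<Prod>(i, j)\<in>(\<lambda>j. (0, Suc j)) ` {..<m}. f i j) * (\<Prod>(i, j)\<in>(\<lambda>(i, j). (Suc i, Suc j)) ` ?P m. f i j)"
    unfolding split by (rule prod.union_disjoint) (use fin in auto)
  also have "\<dots> = (\<Prod>j<m. f 0 (Suc j)) * (\<Prod>(i, j)\<in>?P m. f (Suc i) (Suc j))"
    by (subst (1 2) prod.reindex) (auto simp: inj_on_def case_prod_beta)
  finally show ?thesis .
qed

lemma det_diagonal_mat:
  "det (mat n n (\<lambda>(i, j). if i = j then f j else 0)) = (\<Prod>j<n. f j :: 'a::comm_ring_1)"
  by (subst det_upper_triangular[of _ n])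
     (auto simp: upper_triangular_def diag_mat_def prod.list_conv_set_nth atLeast0LessThan)

lemma det_eq_det_mat_delete_first:
  fixes A :: "'a::comm_ring_1 mat"
  assumes A: "A \<in> carrier_mat (Suc m) (Suc m)"
    and "A $$ (0, 0) = 1" and "\<And>i. 0 < i \<Longrightarrow> i < Suc m \<Longrightarrow> A $$ (i, 0) = 0"
  shows "det A = det (mat_delete A 0 0)"
proof -
  have "det A = (\<Sum>i<Suc m. A $$ (i, 0) * cofactor A i 0)"
    by (rule laplace_expansion_column[OF A]) simp
  also have "\<dots> = A $$ (0, 0) * cofactor A 0 0"
    by (subst sum.lessThan_Suc_shift) (simp add: assms)
  finally show ?thesis by (simp add: assms cofactor_def)
qed

text \<open>Subtracting x times each row from the next one turns the first column of the
  Vandermonde matrix of x # xs into a unit vector.\<close>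
definition row_elimination_mat :: "'a::comm_ring_1 \<Rightarrow> nat \<Rightarrow> 'a mat" where
  "row_elimination_mat x n = mat n n (\<lambda>(i, j). if i = j then 1 else if i = Suc j then - x else 0)"

lemma row_elimination_mat_carrier [simp]: "row_elimination_mat x n \<in> carrier_mat n n"
  by (simp add: row_elimination_mat_def)

lemma det_row_elimination_mat: "det (row_elimination_mat x n) = 1"
  by (subst det_lower_triangular[of n])
     (auto simp: row_elimination_mat_def diag_mat_def prod.list_conv_set_nth)

lemma row_elimination_vandermonde_index:
  fixes xs :: "'a::comm_ring_1 list"
  assumes "i < length xs" "j < length xs"
  shows "(row_elimination_mat x (length xs) * vandermonde xs) $$ (i, j) =
         (if i = 0 then 1 else xs ! j ^ (i - 1) * (xs ! j - x))"
proof -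
  let ?V = "vandermonde xs" and ?n = "length xs"
  have "(row_elimination_mat x ?n * ?V) $$ (i, j) =
        (\<Sum>l<?n. (if l = i then ?V $$ (l, j) else 0) + (if Suc l = i then - x * ?V $$ (l, j) else 0))"
    using assms by (auto simp: row_elimination_mat_def vandermonde_def scalar_prod_def
        atLeast0LessThan intro!: sum.cong)
  also have "\<dots> = ?V $$ (i, j) + (if i = 0 then 0 else - x * ?V $$ (i - 1, j))"
    using assms by (cases i) (auto simp: sum.distrib sum.delta' simp del: mult_minus_left)
  also have "\<dots> = (if i = 0 then 1 else xs ! j ^ (i - 1) * (xs ! j - x))"
    using assms by (cases i) (auto simp: vandermonde_def algebra_simps)
  finally show ?thesis .
qed

lemma det_vandermonde:
  "det (vandermonde xs) = (\<Prod>(i, j)\<in>{(i, j). i < j \<and> j < length xs}. xs ! j - xs ! i)"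
proof (induction xs)
  case Nil
  then show ?case by (simp add: vandermonde_def)
next
  case (Cons x xs)
  let ?m = "length xs"
  let ?C = "row_elimination_mat x (Suc ?m) * vandermonde (x # xs)"
  have C: "?C \<in> carrier_mat (Suc ?m) (Suc ?m)"
    using vandermonde_carrier[of "x # xs"] by (intro mult_carrier_mat) simp_all
  have C_index: "?C $$ (i, j) = (if i = 0 then 1 else (x # xs) ! j ^ (i - 1) * ((x # xs) ! j - x))"
    if "i < Suc ?m" "j < Suc ?m" for i j
    using row_elimination_vandermonde_index[of i "x # xs" j x] that by simp
  have minor: "mat_delete ?C 0 0 = vandermonde xs * mat ?m ?m (\<lambda>(i, j). if i = j then xs ! j - x else 0)"
  proof (rule eq_matI)
    fix i j assume "i < dim_row (vandermonde xs * mat ?m ?m (\<lambda>(i, j). if i = j then xs ! j - x else 0))"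
      and "j < dim_col (vandermonde xs * mat ?m ?m (\<lambda>(i, j). if i = j then xs ! j - x else 0))"
    then have ij: "i < ?m" "j < ?m" by (auto simp: vandermonde_def)
    have "mat_delete ?C 0 0 $$ (i, j) = ?C $$ (Suc i, Suc j)"
      using C ij unfolding mat_delete_def by (subst index_mat) auto
    also have "\<dots> = xs ! j ^ i * (xs ! j - x)"
      using ij by (simp add: C_index)
    also have "\<dots> = (vandermonde xs * mat ?m ?m (\<lambda>(i, j). if i = j then xs ! j - x else 0)) $$ (i, j)"
      using ij by (simp add: vandermonde_def scalar_prod_def atLeast0LessThan if_distrib sum.delta'
          cong: if_cong)
    finally show "mat_delete ?C 0 0 $$ (i, j) = \<dots>" .
  qed (use C in \<open>auto simp: vandermonde_def\<close>)
  have "det (vandermonde (x # xs)) = det ?C"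
    using vandermonde_carrier[of "x # xs"]
    by (subst det_mult[of _ "Suc ?m"]) (simp_all add: det_row_elimination_mat)
  also have "\<dots> = det (mat_delete ?C 0 0)"
    by (rule det_eq_det_mat_delete_first[OF C]) (auto simp: C_index)
  also have "\<dots> = det (vandermonde xs) * (\<Prod>j<?m. xs ! j - x)"
    unfolding minor by (subst det_mult[of _ ?m]) (auto simp: vandermonde_def det_diagonal_mat)
  finally show ?case
    by (simp add: Cons.IH prod_index_pairs_Suc[where f = "\<lambda>i j. (x # xs) ! j - (x # xs) ! i"]
        mult.commute)
qed

section \<open>Products over pairs\<close>

lemma prod_nth_distinct:
  "distinct xs \<Longrightarrow> (\<Prod>l<length xs. f (xs ! l)) = (\<Prod>x\<in>set xs. f x)"
  by (simp add: prod.distinct_set_conv_list prod.list_conv_set_nth atLeast0LessThan)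

definition increasing_pairs :: "'a::linorder set \<Rightarrow> ('a \<times> 'a) set" where
  "increasing_pairs X = {(i, j). i \<in> X \<and> j \<in> X \<and> i < j}"

lemma finite_increasing_pairs: "finite X \<Longrightarrow> finite (increasing_pairs X)"
  by (rule finite_subset[of _ "X \<times> X"]) (auto simp: increasing_pairs_def)

lemma prod_index_pairs_sorted_list:
  assumes "finite X"
  defines "xs \<equiv> sorted_list_of_set X"
  shows "(\<Prod>(l, m)\<in>{(l, m). l < m \<and> m < length xs}. f (xs ! l) (xs ! m)) =
         (\<Prod>(a, b)\<in>increasing_pairs X. f a b)"
proof -
  have sorted: "sorted_wrt (<) xs" and "distinct xs" and set: "set xs = X"
    using assms by simp_all
  let ?h = "\<lambda>(l, m). (xs ! l, xs ! m)"
  have "bij_betw ?h {(l, m). l < m \<and> m < length xs} (increasing_pairs X)"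
  proof (rule bij_betw_imageI)
    show "inj_on ?h {(l, m). l < m \<and> m < length xs}"
      using \<open>distinct xs\<close> by (auto simp: inj_on_def nth_eq_iff_index_eq)
    show "?h ` {(l, m). l < m \<and> m < length xs} = increasing_pairs X"
    proof (intro equalityI subsetI)
      fix p assume "p \<in> ?h ` {(l, m). l < m \<and> m < length xs}"
      then show "p \<in> increasing_pairs X"
        using sorted set by (auto simp: increasing_pairs_def sorted_wrt_iff_nth_less)
    next
      fix p assume "p \<in> increasing_pairs X"
      then obtain l m where p: "p = (xs ! l, xs ! m)" "xs ! l < xs ! m" "l < length xs" "m < length xs"
        using set by (auto simp: increasing_pairs_def in_set_conv_nth)
      then have "l < m"
        using sorted sorted_nth_mono[of xs m l] by (fastforce simp: strict_sorted_imp_sorted)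
      then show "p \<in> ?h ` {(l, m). l < m \<and> m < length xs}"
        using p by (intro rev_image_eqI[of "(l, m)"]) auto
    qed
  qed
  then show ?thesis
    by (subst prod.reindex_bij_betw[symmetric]) (auto simp: case_prod_beta)
qed

lemma prod_increasing_pairs_union:
  fixes g :: "'a::linorder \<Rightarrow> 'a \<Rightarrow> 'b::comm_monoid_mult"
  assumes "finite A" "finite B" "A \<inter> B = {}" and sym: "\<And>a b. g a b = g b a"
  shows "(\<Prod>(i, j)\<in>increasing_pairs (A \<union> B). g i j) =
         (\<Prod>(i, j)\<in>increasing_pairs A. g i j) * (\<Prod>(i, j)\<in>increasing_pairs B. g i j) *
         (\<Prod>a\<in>A. \<Prod>b\<in>B. g a b)"
proof -
  let ?mm = "\<lambda>(a, b). (min a b, max a b)"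
  have split: "increasing_pairs (A \<union> B) = (increasing_pairs A \<union> increasing_pairs B) \<union> ?mm ` (A \<times> B)"
  proof (intro equalityI subsetI)
    fix p assume "p \<in> increasing_pairs (A \<union> B)"
    then obtain i j where p: "p = (i, j)" "i \<in> A \<union> B" "j \<in> A \<union> B" "i < j"
      by (auto simp: increasing_pairs_def)
    consider "i \<in> A" "j \<in> A" | "i \<in> B" "j \<in> B" | "i \<in> A" "j \<in> B" | "i \<in> B" "j \<in> A"
      using p by blast
    then show "p \<in> (increasing_pairs A \<union> increasing_pairs B) \<union> ?mm ` (A \<times> B)"
    proof cases
      case 3
      then show ?thesis using p by (intro UnI2 rev_image_eqI[of "(i, j)"]) auto
    next
      case 4
      then show ?thesis using p by (intro UnI2 rev_image_eqI[of "(j, i)"]) auto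
    qed (use p in \<open>auto simp: increasing_pairs_def\<close>)
  next
    fix p assume "p \<in> (increasing_pairs A \<union> increasing_pairs B) \<union> ?mm ` (A \<times> B)"
    then show "p \<in> increasing_pairs (A \<union> B)"
      using assms(3) by (auto simp: increasing_pairs_def min_def max_def order.order_iff_strict)
  qed
  have inj: "inj_on ?mm (A \<times> B)"
    using assms(3) by (auto simp: inj_on_def min_def max_def split: if_splits)
  have disj: "(increasing_pairs A \<union> increasing_pairs B) \<inter> ?mm ` (A \<times> B) = {}"
    "increasing_pairs A \<inter> increasing_pairs B = {}"
    using assms(3) by (auto simp: increasing_pairs_def min_def max_def split: if_splits)
  have "(\<Prod>p\<in>?mm ` (A \<times> B). case_prod g p) = (\<Prod>(a, b)\<in>A \<times> B. g (min a b) (max a b))"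
    by (subst prod.reindex[OF inj]) (simp add: case_prod_beta)
  also have "\<dots> = (\<Prod>a\<in>A. \<Prod>b\<in>B. g a b)"
    by (subst prod.cartesian_product[symmetric])
       (auto intro!: prod.cong simp: min_def max_def sym)
  finally show ?thesis
    using assms(1,2) disj unfolding split
    by (simp add: prod.union_disjoint finite_increasing_pairs)
qed

lemma prod_offdiagonal:
  fixes g :: "'a::linorder \<Rightarrow> 'a \<Rightarrow> 'b::comm_monoid_mult"
  assumes "finite S" and sym: "\<And>a b. g a b = g b a"
  shows "(\<Prod>i\<in>S. \<Prod>l\<in>S - {i}. g i l) = (\<Prod>(i, j)\<in>increasing_pairs S. g i j) ^ 2"
proof -
  have split: "Sigma S (\<lambda>i. S - {i}) = increasing_pairs S \<union> prod.swap ` increasing_pairs S"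
    by (auto simp: increasing_pairs_def image_iff)
  have "(\<Prod>i\<in>S. \<Prod>l\<in>S - {i}. g i l) = (\<Prod>(i, l)\<in>Sigma S (\<lambda>i. S - {i}). g i l)"
    using assms(1) by (simp add: prod.Sigma)
  also have "\<dots> = (\<Prod>(i, j)\<in>increasing_pairs S. g i j) * (\<Prod>(i, j)\<in>prod.swap ` increasing_pairs S. g i j)"
    unfolding split using assms(1) finite_increasing_pairs[OF assms(1)]
    by (intro prod.union_disjoint) (auto simp: increasing_pairs_def)
  also have "(\<Prod>(i, j)\<in>prod.swap ` increasing_pairs S. g i j) = (\<Prod>(i, j)\<in>increasing_pairs S. g i j)"
    by (subst prod.reindex) (auto simp: case_prod_beta sym)
  finally show ?thesis by (simp add: power2_eq_square)
qed

section \<open>Products of differences of nodes\<close>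

lemma KJ_increasing_pairs: "KJ kappa X = (\<Prod>(i, j)\<in>increasing_pairs X. kappa j - kappa i)"
  by (simp add: KJ_def increasing_pairs_def case_prod_beta)

lemma KJ_eq_det_vandermonde:
  assumes "finite J"
  shows "KJ kappa J = det (vandermonde (map kappa (sorted_list_of_set J)))"
proof -
  let ?xs = "sorted_list_of_set J"
  have "det (vandermonde (map kappa ?xs)) =
        (\<Prod>(l, m)\<in>{(l, m). l < m \<and> m < length ?xs}. kappa (?xs ! m) - kappa (?xs ! l))"
    unfolding det_vandermonde by (rule prod.cong) auto
  also have "\<dots> = KJ kappa J"
    unfolding KJ_increasing_pairs by (rule prod_index_pairs_sorted_list[OF assms])
  finally show ?thesis ..
qed

lemma KJ_nonzero:
  assumes "inj_on kappa X"
  shows "KJ kappa X \<noteq> 0"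
  using inj_on_contraD[OF assms]
  by (cases "finite (increasing_pairs X)")
     (auto simp: KJ_increasing_pairs prod_zero_iff increasing_pairs_def)

definition cross_sq :: "(nat \<Rightarrow> complex) \<Rightarrow> nat set \<Rightarrow> nat set \<Rightarrow> complex" where
  "cross_sq kappa A B = (\<Prod>a\<in>A. \<Prod>b\<in>B. (kappa b - kappa a) ^ 2)"

lemma cross_sq_nonzero:
  assumes "inj_on kappa (A \<union> B)" "A \<inter> B = {}"
  shows "cross_sq kappa A B \<noteq> 0"
proof -
  have "(kappa b - kappa a) ^ 2 \<noteq> 0" if "a \<in> A" "b \<in> B" for a b
    using inj_on_contraD[OF assms(1), of b a] assms(2) that by auto
  then show ?thesis
    unfolding cross_sq_def by (cases "finite A"; cases "finite B") auto
qed

lemma KJ_sq: "KJ kappa X ^ 2 = (\<Prod>(i, j)\<in>increasing_pairs X. (kappa j - kappa i) ^ 2)"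
  by (simp add: KJ_increasing_pairs prod_power_distrib case_prod_beta)

lemma KJ_union_sq:
  assumes "finite A" "finite B" "A \<inter> B = {}"
  shows "KJ kappa (A \<union> B) ^ 2 = KJ kappa A ^ 2 * KJ kappa B ^ 2 * cross_sq kappa A B"
  unfolding KJ_sq cross_sq_def
  by (rule prod_increasing_pairs_union[OF assms]) (simp add: power2_commute)

lemma cross_sq_union_left:
  assumes "finite A" "finite B" "A \<inter> B = {}"
  shows "cross_sq kappa (A \<union> B) T = cross_sq kappa A T * cross_sq kappa B T"
  unfolding cross_sq_def using assms by (rule prod.union_disjoint)

lemma alphaJ_eq:
  assumes "finite J" "card J = k"
  defines "S \<equiv> {1..k} - J" and "T \<equiv> J - {1..k}"
  shows "alphaJ k kappa beta J =
         KJ kappa S ^ 2 * KJ kappa T ^ 2 / cross_sq kappa S T *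
         ((\<Prod>a\<in>S. bet beta (a - 1)) / (\<Prod>b\<in>T. bet beta (b - 1)))"
proof -
  define il where "il = sorted_list_of_set S"
  define jl where "jl = sorted_list_of_set T"
  define s where "s = length jl"
  have "finite S" "finite T" using assms(1) by (simp_all add: S_def T_def)
  moreover have "card S = card T"
    using assms by (simp add: S_def T_def card_Diff_subset_Int Int_commute)
  ultimately have il: "distinct il" "set il = S" "length il = s" and jl: "distinct jl" "set jl = T"
    by (simp_all add: il_def jl_def s_def)
  have pairs: "(\<Prod>p\<in>{(l, m). l < m \<and> m < s}. (kappa (il ! snd p) - kappa (il ! fst p)) ^ 2 *
          (kappa (jl ! snd p) - kappa (jl ! fst p)) ^ 2) = KJ kappa S ^ 2 * KJ kappa T ^ 2"
    using prod_index_pairs_sorted_list[OF \<open>finite S\<close>, of "\<lambda>a b. (kappa b - kappa a) ^ 2"]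
      prod_index_pairs_sorted_list[OF \<open>finite T\<close>, of "\<lambda>a b. (kappa b - kappa a) ^ 2"] il(3)
    by (simp add: prod.distrib KJ_sq case_prod_beta il_def jl_def s_def)
  have cross: "(\<Prod>p\<in>{..<s} \<times> {..<s}. (kappa (jl ! snd p) - kappa (il ! fst p)) ^ 2) =
                 cross_sq kappa S T"
  proof -
    have inner: "(\<Prod>m<s. (kappa (jl ! m) - kappa a) ^ 2) = (\<Prod>b\<in>T. (kappa b - kappa a) ^ 2)" for a
      using prod_nth_distinct[OF jl(1), of "\<lambda>b. (kappa b - kappa a) ^ 2"] jl(2) by (simp add: s_def)
    have "(\<Prod>p\<in>{..<s} \<times> {..<s}. (kappa (jl ! snd p) - kappa (il ! fst p)) ^ 2) =
          (\<Prod>l<s. \<Prod>b\<in>T. (kappa b - kappa (il ! l)) ^ 2)"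
      by (simp add: prod.cartesian_product case_prod_beta flip: inner)
    also have "\<dots> = cross_sq kappa S T"
      using prod_nth_distinct[OF il(1), of "\<lambda>a. \<Prod>b\<in>T. (kappa b - kappa a) ^ 2"] il(2,3)
      by (simp add: cross_sq_def)
    finally show ?thesis .
  qed
  have bet: "(\<Prod>l<s. bet beta (il ! l - 1) / bet beta (jl ! l - 1)) =
                 (\<Prod>a\<in>S. bet beta (a - 1)) / (\<Prod>b\<in>T. bet beta (b - 1))"
    using prod_nth_distinct[OF jl(1), of "\<lambda>b. bet beta (b - 1)"]
      prod_nth_distinct[OF il(1), of "\<lambda>a. bet beta (a - 1)"] il(2,3) jl(2)
    by (simp add: prod_dividef s_def)
  show ?thesis
    unfolding alphaJ_def Let_def S_def[symmetric] T_def[symmetric] il_def[symmetric]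
      jl_def[symmetric] s_def[symmetric] pairs cross bet
    by simp
qed

section \<open>Lagrange basis\<close>

text \<open>For x in I this is the derivative at kappa x of the node polynomial of I, for x outside I
  its value there.\<close>
definition node_prod :: "nat set \<Rightarrow> (nat \<Rightarrow> 'a::comm_ring_1) \<Rightarrow> nat \<Rightarrow> 'a" where
  "node_prod I kappa x = (\<Prod>l\<in>I - {x}. kappa x - kappa l)"

definition lagrange_basis :: "nat set \<Rightarrow> (nat \<Rightarrow> 'a::field) \<Rightarrow> nat \<Rightarrow> 'a poly" where
  "lagrange_basis I kappa i = smult (1 / node_prod I kappa i) (\<Prod>l\<in>I - {i}. [:- kappa l, 1:])"

lemma node_prod_nonzero:
  fixes kappa :: "nat \<Rightarrow> 'a::idom"
  assumes "inj_on kappa (insert x I)"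
  shows "node_prod I kappa x \<noteq> 0"
  using inj_on_contraD[OF assms] by (cases "finite I") (auto simp: node_prod_def prod_zero_iff)

lemma poly_lagrange_basis:
  "poly (lagrange_basis I kappa i) y = (\<Prod>l\<in>I - {i}. y - kappa l) / node_prod I kappa i"
  by (simp add: lagrange_basis_def poly_prod)

lemma degree_lagrange_basis:
  assumes "finite I" "i \<in> I"
  shows "degree (lagrange_basis I kappa i) < card I"
proof -
  have "degree (lagrange_basis I kappa i) \<le> degree (\<Prod>l\<in>I - {i}. [:- kappa l, 1:])"
    by (simp add: lagrange_basis_def)
  also have "\<dots> \<le> (\<Sum>l\<in>I - {i}. degree [:- kappa l, 1:])"
    using degree_prod_sum_le[of "I - {i}" "\<lambda>l. [:- kappa l, 1:]"] assms by (simp add: o_def)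
  also have "\<dots> < card I"
    using assms card_gt_0_iff[of I] by (auto simp: card_Diff_singleton)
  finally show ?thesis .
qed

lemma poly_lagrange_basis_node:
  assumes "finite I" "inj_on kappa I" "i \<in> I" "c \<in> I"
  shows "poly (lagrange_basis I kappa i) (kappa c) = (if i = c then 1 else 0)"
proof (cases "i = c")
  case True
  then show ?thesis
    using node_prod_nonzero[of kappa i I] assms by (simp add: poly_lagrange_basis insert_absorb)
       (simp add: node_prod_def)
next
  case False
  then have "(\<Prod>l\<in>I - {i}. kappa c - kappa l) = 0"
    using assms(1,4) by (intro prod_zero) auto
  then show ?thesis
    using False by (simp add: poly_lagrange_basis)
qed

lemma poly_eq_sum_coeff_less:
  fixes p :: "'a::comm_semiring_1 poly"
  assumes "degree p < k"
  shows "poly p y = (\<Sum>m<k. coeff p m * y ^ m)"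
proof -
  have "poly p y = (\<Sum>m\<le>degree p. coeff p m * y ^ m)" by (rule poly_altdef)
  also have "\<dots> = (\<Sum>m<k. coeff p m * y ^ m)"
    by (rule sum.mono_neutral_left) (use assms in \<open>auto simp: coeff_eq_0\<close>)
  finally show ?thesis .
qed

definition lagrange_coeff_mat :: "nat \<Rightarrow> (nat \<Rightarrow> 'a::field) \<Rightarrow> 'a mat" where
  "lagrange_coeff_mat k kappa = mat k k (\<lambda>(r, m). coeff (lagrange_basis {1..k} kappa (Suc r)) m)"

lemma lagrange_coeff_mat_carrier [simp]: "lagrange_coeff_mat k kappa \<in> carrier_mat k k"
  by (simp add: lagrange_coeff_mat_def)

lemma lagrange_coeff_mat_mult_vandermonde:
  assumes "length ys = k"
  shows "lagrange_coeff_mat k kappa * vandermonde ys =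
         mat k k (\<lambda>(r, b). poly (lagrange_basis {1..k} kappa (Suc r)) (ys ! b))"
proof (rule eq_matI)
  fix r b assume "r < dim_row (mat k k (\<lambda>(r, b). poly (lagrange_basis {1..k} kappa (Suc r)) (ys ! b)))"
    and "b < dim_col (mat k k (\<lambda>(r, b). poly (lagrange_basis {1..k} kappa (Suc r)) (ys ! b)))"
  then have r: "r < k" and b: "b < k" by auto
  have "(lagrange_coeff_mat k kappa * vandermonde ys) $$ (r, b) =
        (\<Sum>m<k. coeff (lagrange_basis {1..k} kappa (Suc r)) m * (ys ! b) ^ m)"
    using r b assms
    by (auto simp: lagrange_coeff_mat_def vandermonde_def scalar_prod_def atLeast0LessThan)
  also have "\<dots> = poly (lagrange_basis {1..k} kappa (Suc r)) (ys ! b)"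
    using degree_lagrange_basis[of "{1..k}" "Suc r" kappa] r by (simp add: poly_eq_sum_coeff_less)
  finally show "(lagrange_coeff_mat k kappa * vandermonde ys) $$ (r, b) =
      mat k k (\<lambda>(r, b). poly (lagrange_basis {1..k} kappa (Suc r)) (ys ! b)) $$ (r, b)"
    using r b by simp
qed (use assms in \<open>auto simp: lagrange_coeff_mat_def vandermonde_def\<close>)

lemma det_lagrange_coeff_mat:
  assumes "inj_on kappa {1..k}"
  shows "det (lagrange_coeff_mat k kappa) * KJ kappa {1..k} = 1"
proof -
  define xs where "xs = sorted_list_of_set {1..k}"
  have xs: "xs = [1..<Suc k]"
    unfolding xs_def by (metis atLeastLessThanSuc_atLeastAtMost sorted_list_of_set_range)
  have "lagrange_coeff_mat k kappa * vandermonde (map kappa xs) =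
        mat k k (\<lambda>(r, b). poly (lagrange_basis {1..k} kappa (Suc r)) (map kappa xs ! b))"
    by (rule lagrange_coeff_mat_mult_vandermonde) (simp add: xs)
  also have "\<dots> = 1\<^sub>m k"
  proof (rule eq_matI)
    fix r b assume "r < dim_row (1\<^sub>m k :: complex mat)" "b < dim_col (1\<^sub>m k :: complex mat)"
    then show "mat k k (\<lambda>(r, b). poly (lagrange_basis {1..k} kappa (Suc r)) (map kappa xs ! b)) $$ (r, b) =
               1\<^sub>m k $$ (r, b)"
      using poly_lagrange_basis_node[OF _ assms, of "Suc r" "Suc b"] by (simp add: xs nth_upt del: upt_Suc)
  qed auto
  finally have "lagrange_coeff_mat k kappa * vandermonde (map kappa xs) = 1\<^sub>m k" .
  moreover have "vandermonde (map kappa xs) \<in> carrier_mat k k"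
    using vandermonde_carrier[of "map kappa xs"] by (simp add: xs_def)
  ultimately have "det (lagrange_coeff_mat k kappa) * det (vandermonde (map kappa xs)) = 1"
    using det_mult[of "lagrange_coeff_mat k kappa" k "vandermonde (map kappa xs)"] by simp
  then show ?thesis by (simp add: KJ_eq_det_vandermonde xs_def)
qed

lemma det_lagrange_eval_mat:
  assumes "inj_on kappa {1..k}" "finite J" "card J = k"
  shows "det (mat k k (\<lambda>(r, b). poly (lagrange_basis {1..k} kappa (Suc r))
                                    (kappa (sorted_list_of_set J ! b))))
         = KJ kappa J / KJ kappa {1..k}"
proof -
  let ?V = "vandermonde (map kappa (sorted_list_of_set J))"
  have "mat k k (\<lambda>(r, b). poly (lagrange_basis {1..k} kappa (Suc r)) (kappa (sorted_list_of_set J ! b)))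
        = lagrange_coeff_mat k kappa * ?V"
    using assms(2,3) by (subst lagrange_coeff_mat_mult_vandermonde) auto
  moreover have "det (lagrange_coeff_mat k kappa * ?V) = det (lagrange_coeff_mat k kappa) * KJ kappa J"
    using assms(2,3) vandermonde_carrier[of "map kappa (sorted_list_of_set J)"]
    by (subst det_mult[of _ k]) (auto simp: KJ_eq_det_vandermonde)
  moreover have "KJ kappa {1..k} \<noteq> 0"
    using det_lagrange_coeff_mat[OF assms(1)] by auto
  ultimately show ?thesis
    using det_lagrange_coeff_mat[OF assms(1)] by (simp add: field_simps)
qed

section \<open>Factorization of the minors\<close>

lemma det_mat_scaled:
  fixes N :: "'a::comm_ring_1 mat"
  assumes N: "N \<in> carrier_mat n n"
  shows "det (mat n n (\<lambda>(i, j). a i * b j * N $$ (i, j))) = (\<Prod>i<n. a i) * (\<Prod>j<n. b j) * det N"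
proof -
  have M: "mat n n (\<lambda>(i, j). a i * b j * N $$ (i, j)) \<in> carrier_mat n n" by simp
  have "det (mat n n (\<lambda>(i, j). a i * b j * N $$ (i, j))) =
        (\<Sum>p | p permutes {0..<n}. of_int (sign p) * (\<Prod>i = 0..<n. a i * b (p i) * N $$ (i, p i)))"
    unfolding det_def'[OF M] by (intro sum.cong refl) (auto intro!: prod.cong dest: permutes_in_image)
  also have "\<dots> = (\<Sum>p | p permutes {0..<n}.
      (\<Prod>i<n. a i) * (\<Prod>j<n. b j) * (of_int (sign p) * (\<Prod>i = 0..<n. N $$ (i, p i))))"
  proof (rule sum.cong[OF refl])
    fix p assume "p \<in> {p. p permutes {0..<n}}"
    then have "(\<Prod>i = 0..<n. b (p i)) = (\<Prod>j = 0..<n. b j)"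
      using prod.permute[of p "{0..<n}" b] by (simp add: o_def)
    then show "of_int (sign p) * (\<Prod>i = 0..<n. a i * b (p i) * N $$ (i, p i)) =
      (\<Prod>i<n. a i) * (\<Prod>j<n. b j) * (of_int (sign p) * (\<Prod>i = 0..<n. N $$ (i, p i)))"
      by (simp add: prod.distrib atLeast0LessThan)
  qed
  also have "\<dots> = (\<Prod>i<n. a i) * (\<Prod>j<n. b j) * det N"
    unfolding det_def'[OF N] by (simp add: sum_distrib_left)
  finally show ?thesis .
qed

definition lagrange_scale :: "nat \<Rightarrow> (nat \<Rightarrow> complex) \<Rightarrow> (nat \<Rightarrow> complex) \<Rightarrow> nat \<Rightarrow> complex" where
  "lagrange_scale k kappa beta c = bet beta (c - 1) * node_prod {1..k} kappa c ^ 2"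

lemma bet_nonzero:
  assumes "\<And>i. i \<in> {1..n - 1} \<Longrightarrow> beta i \<noteq> 0" "j \<in> {1..n}"
  shows "bet beta (j - 1) \<noteq> 0"
proof (cases "j = 1")
  case False
  then have "j - 1 \<in> {1..n - 1}" using assms(2) by auto
  then show ?thesis using assms(1) by (simp add: bet_def)
qed (simp add: bet_def)

lemma lagrange_scale_nonzero:
  assumes "inj_on kappa {1..n}" "k \<le> n" "\<And>i. i \<in> {1..n - 1} \<Longrightarrow> beta i \<noteq> 0" "c \<in> {1..n}"
  shows "lagrange_scale k kappa beta c \<noteq> 0"
proof -
  have "inj_on kappa (insert c {1..k})"
    using assms(1) by (rule inj_on_subset) (use assms(2,4) in auto)
  then show ?thesis
    using bet_nonzero[OF assms(3,4)] node_prod_nonzero by (simp add: lagrange_scale_def)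
qed

lemma Aent_eq_lagrange:
  assumes inj: "inj_on kappa {1..n}" and "k \<le> n"
    and beta: "\<And>i. i \<in> {1..n - 1} \<Longrightarrow> beta i \<noteq> 0"
    and i: "i \<in> {1..k}" and c: "c \<in> {1..n}"
  shows "Aent k kappa beta i c =
         lagrange_scale k kappa beta i / lagrange_scale k kappa beta c *
         poly (lagrange_basis {1..k} kappa i) (kappa c)"
proof (cases "c \<le> k")
  case True
  have "inj_on kappa {1..k}" using inj by (rule inj_on_subset) (use \<open>k \<le> n\<close> in auto)
  then show ?thesis
    using True c i poly_lagrange_basis_node[of "{1..k}" kappa i c]
      lagrange_scale_nonzero[OF inj \<open>k \<le> n\<close> beta, where c = c]
    by (auto simp: Aent_def)
next
  case False
  define Q where "Q = (\<Prod>l\<in>{1..k} - {i}. kappa c - kappa l)"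
  define d where "d = kappa c - kappa i"
  have "i \<in> {1..n}" "c \<noteq> i" using i False \<open>k \<le> n\<close> by auto
  then have "d \<noteq> 0"
    using inj_on_contraD[OF inj \<open>c \<noteq> i\<close> c \<open>i \<in> {1..n}\<close>] by (simp add: d_def)
  have node_c: "node_prod {1..k} kappa c = d * Q"
    using False i by (simp add: node_prod_def Q_def d_def prod.remove)
  have inj_ci: "inj_on kappa (insert c {1..k})" "inj_on kappa (insert i {1..k})"
    using inj by (rule inj_on_subset; use c i \<open>k \<le> n\<close> in auto)+
  have "Q \<noteq> 0"
    using node_prod_nonzero[OF inj_ci(1)] node_c by auto
  moreover have "node_prod {1..k} kappa i \<noteq> 0"
    using node_prod_nonzero[OF inj_ci(2)] .
  moreover have "bet beta (i - 1) \<noteq> 0" "bet beta (c - 1) \<noteq> 0"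
    using bet_nonzero[OF beta] \<open>i \<in> {1..n}\<close> c by auto
  moreover have "Aent k kappa beta i c =
      bet beta (i - 1) / (bet beta (c - 1) * d ^ 2) * (node_prod {1..k} kappa i / Q)"
    using False by (simp add: Aent_def prod_dividef node_prod_def Q_def d_def)
  moreover have "poly (lagrange_basis {1..k} kappa i) (kappa c) = Q / node_prod {1..k} kappa i"
    by (simp add: poly_lagrange_basis Q_def)
  ultimately show ?thesis
    using \<open>d \<noteq> 0\<close> unfolding lagrange_scale_def node_c by (simp add: field_simps power2_eq_square)
qed

lemma minorA_eq_lagrange_scale:
  assumes "k \<le> n" and inj: "inj_on kappa {1..n}"
    and beta: "\<And>i. i \<in> {1..n - 1} \<Longrightarrow> beta i \<noteq> 0"
    and J: "J \<subseteq> {1..n}" "card J = k"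
  shows "minorA k n kappa beta J =
         (\<Prod>i\<in>{1..k}. lagrange_scale k kappa beta i) / (\<Prod>c\<in>J. lagrange_scale k kappa beta c) *
         (KJ kappa J / KJ kappa {1..k})"
proof -
  let ?s = "lagrange_scale k kappa beta"
  define cs where "cs = sorted_list_of_set J"
  have "finite J" using J(1) finite_subset by blast
  then have cs: "length cs = k" "distinct cs" "set cs = J"
    using J(2) by (simp_all add: cs_def)
  then have cs_n: "cs ! b \<in> {1..n}" if "b < k" for b
    using J(1) nth_mem that by blast
  have inj_k: "inj_on kappa {1..k}" using inj by (rule inj_on_subset) (use \<open>k \<le> n\<close> in auto)
  let ?N = "mat k k (\<lambda>(r, b). poly (lagrange_basis {1..k} kappa (Suc r)) (kappa (cs ! b)))"
  have "mat k k (\<lambda>(r, b). Amat k n kappa beta $$ (r, cs ! b - 1)) =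
        mat k k (\<lambda>(r, b). ?s (Suc r) * (1 / ?s (cs ! b)) * ?N $$ (r, b))"
  proof (rule eq_matI)
    fix r b assume "r < dim_row (mat k k (\<lambda>(r, b). ?s (Suc r) * (1 / ?s (cs ! b)) * ?N $$ (r, b)))"
      and "b < dim_col (mat k k (\<lambda>(r, b). ?s (Suc r) * (1 / ?s (cs ! b)) * ?N $$ (r, b)))"
    then have rb: "r < k" "b < k" by auto
    then have "Amat k n kappa beta $$ (r, cs ! b - 1) = Aent k kappa beta (Suc r) (cs ! b)"
      using cs_n[of b] \<open>k \<le> n\<close> by (auto simp: Amat_def)
    then show "mat k k (\<lambda>(r, b). Amat k n kappa beta $$ (r, cs ! b - 1)) $$ (r, b) =
               mat k k (\<lambda>(r, b). ?s (Suc r) * (1 / ?s (cs ! b)) * ?N $$ (r, b)) $$ (r, b)"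
      using rb cs_n[of b] Aent_eq_lagrange[OF inj \<open>k \<le> n\<close> beta, where i = "Suc r" and c = "cs ! b"] by simp
  qed auto
  then have "minorA k n kappa beta J =
             det (mat k k (\<lambda>(r, b). ?s (Suc r) * (1 / ?s (cs ! b)) * ?N $$ (r, b)))"
    by (simp only: minorA_def Let_def cs_def)
  also have "\<dots> = (\<Prod>r<k. ?s (Suc r)) * (\<Prod>b<k. 1 / ?s (cs ! b)) * det ?N"
    by (rule det_mat_scaled) simp
  also have "(\<Prod>r<k. ?s (Suc r)) = (\<Prod>i\<in>{1..k}. ?s i)"
    by (simp add: prod.atLeast1_atMost_eq)
  also have "(\<Prod>b<k. 1 / ?s (cs ! b)) = 1 / (\<Prod>c\<in>J. ?s c)"
    using prod_nth_distinct[OF cs(2), of "\<lambda>c. 1 / ?s c"] cs by (simp add: prod_dividef)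
  also have "det ?N = KJ kappa J / KJ kappa {1..k}"
    using det_lagrange_eval_mat[OF inj_k \<open>finite J\<close> J(2)] by (simp add: cs_def)
  finally show ?thesis by simp
qed

section \<open>The scaling factors\<close>

lemma prod_node_prod_sq_inner:
  assumes "finite U" "finite S" "U \<inter> S = {}"
  shows "(\<Prod>i\<in>S. node_prod (U \<union> S) kappa i ^ 2) = cross_sq kappa U S * KJ kappa S ^ 4"
proof -
  have "(\<Prod>i\<in>S. node_prod (U \<union> S) kappa i ^ 2) =
        (\<Prod>i\<in>S. (\<Prod>l\<in>U. (kappa i - kappa l) ^ 2) * (\<Prod>l\<in>S - {i}. (kappa i - kappa l) ^ 2))"
  proof (rule prod.cong[OF refl])
    fix i assume "i \<in> S"
    then have "U \<union> S - {i} = U \<union> (S - {i})" using assms(3) by auto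
    then show "node_prod (U \<union> S) kappa i ^ 2 =
               (\<Prod>l\<in>U. (kappa i - kappa l) ^ 2) * (\<Prod>l\<in>S - {i}. (kappa i - kappa l) ^ 2)"
      using assms unfolding node_prod_def prod_power_distrib
      by (simp add: prod.union_disjoint disjoint_iff)
  qed
  also have "\<dots> = cross_sq kappa U S * (\<Prod>i\<in>S. \<Prod>l\<in>S - {i}. (kappa i - kappa l) ^ 2)"
    by (simp add: prod.distrib cross_sq_def prod.swap[of _ S U])
  also have "(\<Prod>i\<in>S. \<Prod>l\<in>S - {i}. (kappa i - kappa l) ^ 2) =
             (\<Prod>(i, j)\<in>increasing_pairs S. (kappa j - kappa i) ^ 2) ^ 2"
    using prod_offdiagonal[OF assms(2), of "\<lambda>i l. (kappa i - kappa l) ^ 2"]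
    by (simp add: power2_commute)
  also have "\<dots> = KJ kappa S ^ 4"
    by (simp add: KJ_sq[symmetric] flip: power_mult)
  finally show ?thesis .
qed

lemma prod_node_prod_sq_outer:
  assumes "I \<inter> T = {}"
  shows "(\<Prod>c\<in>T. node_prod I kappa c ^ 2) = cross_sq kappa I T"
proof -
  have "(\<Prod>c\<in>T. node_prod I kappa c ^ 2) = (\<Prod>c\<in>T. \<Prod>a\<in>I. (kappa c - kappa a) ^ 2)"
  proof (rule prod.cong[OF refl])
    fix c assume "c \<in> T"
    then have "I - {c} = I" using assms by auto
    then show "node_prod I kappa c ^ 2 = (\<Prod>a\<in>I. (kappa c - kappa a) ^ 2)"
      by (simp add: node_prod_def prod_power_distrib)
  qed
  then show ?thesis
    by (simp add: cross_sq_def prod.swap[of _ T I])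
qed

lemma prod_Un_ratio_cancel:
  fixes s :: "'a \<Rightarrow> 'b::field"
  assumes "finite U" "finite S" "finite T" "U \<inter> S = {}" "U \<inter> T = {}"
    and "\<And>c. c \<in> U \<Longrightarrow> s c \<noteq> 0"
  shows "prod s (U \<union> S) / prod s (U \<union> T) = prod s S / prod s T"
  using assms by (simp add: prod.union_disjoint prod_zero_iff)

lemma prod_lagrange_scale_ratio:
  assumes "k \<le> n" and inj: "inj_on kappa {1..n}"
    and beta: "\<And>i. i \<in> {1..n - 1} \<Longrightarrow> beta i \<noteq> 0"
    and J: "J \<subseteq> {1..n}"
  defines "U \<equiv> J \<inter> {1..k}" and "S \<equiv> {1..k} - J" and "T \<equiv> J - {1..k}"
  shows "(\<Prod>i\<in>{1..k}. lagrange_scale k kappa beta i) / (\<Prod>c\<in>J. lagrange_scale k kappa beta c) =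
         (\<Prod>a\<in>S. bet beta (a - 1)) * (cross_sq kappa U S * KJ kappa S ^ 4) /
         ((\<Prod>b\<in>T. bet beta (b - 1)) * (cross_sq kappa U T * cross_sq kappa S T))"
proof -
  let ?s = "lagrange_scale k kappa beta"
  have "finite J" using J finite_subset by blast
  then have fin: "finite U" "finite S" "finite T" by (simp_all add: U_def S_def T_def)
  have I: "{1..k} = U \<union> S" "U \<inter> S = {}" and J_UT: "J = U \<union> T" "U \<inter> T = {}" and "S \<inter> T = {}"
    by (auto simp: U_def S_def T_def)
  have "U \<subseteq> {1..n}" using J by (auto simp: U_def)
  then have "?s c \<noteq> 0" if "c \<in> U" for c
    using lagrange_scale_nonzero[where beta = beta, OF inj \<open>k \<le> n\<close> beta] that by blast
  then have "(\<Prod>i\<in>{1..k}. ?s i) / (\<Prod>c\<in>J. ?s c) = (\<Prod>c\<in>S. ?s c) / (\<Prod>c\<in>T. ?s c)"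
    unfolding I(1) J_UT(1) by (intro prod_Un_ratio_cancel fin I(2) J_UT(2))
  moreover have "(\<Prod>c\<in>S. ?s c) = (\<Prod>a\<in>S. bet beta (a - 1)) * (cross_sq kappa U S * KJ kappa S ^ 4)"
    unfolding lagrange_scale_def prod.distrib I(1) prod_node_prod_sq_inner[OF fin(1,2) I(2)] ..
  moreover have "(\<Prod>c\<in>T. ?s c) =
      (\<Prod>b\<in>T. bet beta (b - 1)) * (cross_sq kappa U T * cross_sq kappa S T)"
    using \<open>S \<inter> T = {}\<close> J_UT(2)
    unfolding lagrange_scale_def prod.distrib I(1)
    by (simp add: prod_node_prod_sq_outer cross_sq_union_left[OF fin(1,2) I(2)] Int_Un_distrib2)
  ultimately show ?thesis by simp
qed

lemma alphaJ_mult_KJ_ratio: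
  assumes "finite J" "card J = k" and inj: "inj_on kappa ({1..k} \<union> J)"
  defines "U \<equiv> J \<inter> {1..k}" and "S \<equiv> {1..k} - J" and "T \<equiv> J - {1..k}"
  shows "alphaJ k kappa beta J * (KJ kappa {1..k} / KJ kappa J) ^ 2 =
         (\<Prod>a\<in>S. bet beta (a - 1)) * (cross_sq kappa U S * KJ kappa S ^ 4) /
         ((\<Prod>b\<in>T. bet beta (b - 1)) * (cross_sq kappa U T * cross_sq kappa S T))"
proof -
  let ?bS = "\<Prod>a\<in>S. bet beta (a - 1)" and ?bT = "\<Prod>b\<in>T. bet beta (b - 1)"
  have fin: "finite U" "finite S" "finite T" using assms(1) by (simp_all add: U_def S_def T_def)
  have I: "{1..k} = U \<union> S" "U \<inter> S = {}" and J_UT: "J = U \<union> T" "U \<inter> T = {}" and "S \<inter> T = {}"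
    by (auto simp: U_def S_def T_def)
  have inj_sub: "inj_on kappa X" if "X \<subseteq> U \<union> S \<union> T" for X
    using inj_on_subset[OF inj] that by (auto simp: U_def S_def T_def)
  have "KJ kappa U \<noteq> 0" "KJ kappa T \<noteq> 0"
    by (rule KJ_nonzero, rule inj_sub, blast)+
  moreover have "cross_sq kappa U T \<noteq> 0" "cross_sq kappa S T \<noteq> 0"
    by (rule cross_sq_nonzero[OF inj_sub J_UT(2)] cross_sq_nonzero[OF inj_sub \<open>S \<inter> T = {}\<close>],
        blast)+
  moreover have "KJ kappa {1..k} ^ 2 = KJ kappa U ^ 2 * KJ kappa S ^ 2 * cross_sq kappa U S"
    unfolding I(1) by (rule KJ_union_sq[OF fin(1,2) I(2)])
  moreover have "KJ kappa J ^ 2 = KJ kappa U ^ 2 * KJ kappa T ^ 2 * cross_sq kappa U T"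
    unfolding J_UT(1) by (rule KJ_union_sq[OF fin(1,3) J_UT(2)])
  moreover have "alphaJ k kappa beta J =
      KJ kappa S ^ 2 * KJ kappa T ^ 2 / cross_sq kappa S T * (?bS / ?bT)"
    using alphaJ_eq[OF assms(1,2)] by (simp add: S_def T_def)
  ultimately show ?thesis
    unfolding power_divide by (cases "?bT = 0") (simp_all add: field_simps eval_nat_numeral)
qed

theorem proposition5p2:
  fixes k n :: nat and kappa beta :: "nat \<Rightarrow> complex" and J :: "nat set"
  assumes "1 \<le> k" and "k < n"
    and "inj_on kappa {1..n}"
    and "\<And>i. i \<in> {1..n-1} \<Longrightarrow> beta i \<noteq> 0"
    and "J \<subseteq> {1..n}" and "card J = k"
  shows "minorA k n kappa beta J = alphaJ k kappa beta J * KJ kappa {1..k} / KJ kappa J"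
proof -
  have "k \<le> n" using \<open>k < n\<close> by simp
  note hyps = \<open>k \<le> n\<close> assms(3) assms(4) assms(5,6)
  have "finite J" using assms(5) finite_subset by blast
  have inj_IJ: "inj_on kappa ({1..k} \<union> J)"
    using assms(3) by (rule inj_on_subset) (use assms(5) \<open>k \<le> n\<close> in auto)
  then have "KJ kappa {1..k} \<noteq> 0" "KJ kappa J \<noteq> 0"
    by (auto intro!: KJ_nonzero elim: inj_on_subset)
  have "minorA k n kappa beta J =
        (\<Prod>i\<in>{1..k}. lagrange_scale k kappa beta i) / (\<Prod>c\<in>J. lagrange_scale k kappa beta c) *
        (KJ kappa J / KJ kappa {1..k})"
    by (rule minorA_eq_lagrange_scale[where beta = beta, OF hyps])
  also have "\<dots> = alphaJ k kappa beta J * (KJ kappa {1..k} / KJ kappa J) ^ 2 *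
                   (KJ kappa J / KJ kappa {1..k})"
    using prod_lagrange_scale_ratio[where beta = beta, OF hyps(1-4)]
      alphaJ_mult_KJ_ratio[OF \<open>finite J\<close> assms(6) inj_IJ]
    by simp
  finally show ?thesis
    using \<open>KJ kappa {1..k} \<noteq> 0\<close> \<open>KJ kappa J \<noteq> 0\<close> by (simp add: power2_eq_square)
qed

end
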